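(* In the line network model (see context) with $\ell\ge2$ links and any erasure probabilities $p_1,\dots,p_\ell\in[0,1)$, the process $(Y_k)_{1\le k\le n}$ is stochastically increasing: for all $1\le k\le k'\le n$ and all $\omega\in\mathbb{N}^{\ell-1}$, $$\mathbb{P}(Y_k\succeq\omega)\le\mathbb{P}(Y_{k'}\succeq\omega),$$ where $\succeq$ is the componentwise order on $\mathbb{N}^{\ell-1}$ ($a\succeq b$ iff $a_j\ge b_j$ for all $j$).
   Context: Line network model. Fix integers $\ell\ge1$, $n\ge1$ and erasure probabilities $p_1,\dots,p_\ell\in[0,1)$. Let $\{z_{t,i}\}$ be independent Bernoulli variables with $\mathbb{P}(z_{t,i}=1)=1-p_i$. The rank $\rho_i(t)$ of node $N^{(i)}$ after $t$ steps satisfies $\rho_1(t)=n$, $\rho_i(0)=0$ for $i\ge2$, and $\rho_{i+1}(t)=\rho_{i+1}(t-1)+z_{t,i}\mathbf 1\{\rho_i(t-1)>\rho_{i+1}(t-1)\}$ for $t\ge1$, $1\le i\le\ell$; $\rho_i-\rho_{i+1}$ is the number of innovative packets at node $N^{(i)}$. For $1\le k\le n$ let $\sigma_k:=\min\{t:\rho_2(t)=k\}$ be the time step at which the $k$-th packet arrives at $N^{(2)}$, and let $Y_k:=(R^{(2)}_k,\dots,R^{(\ell)}_k)$ with $R^{(i)}_k:=\rho_i(\sigma_k)-\rho_{i+1}(\sigma_k)$, the numbers of innovative packets at nodes $N^{(2)},\dots,N^{(\ell)}$ at that moment (including packet $k$). *)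

theory Defs
  imports "HOL-Probability.Probability"
begin

text \<open>Ranks in the line network. zz t i is the realisation of z_{t,i}.
  rank n zz t i = rho_i(t) for nodes i = 1..l+1 (node 1 is the source).\<close>
fun rank :: "nat \<Rightarrow> (nat \<Rightarrow> nat \<Rightarrow> bool) \<Rightarrow> nat \<Rightarrow> nat \<Rightarrow> nat" where
  "rank n zz 0 i = (if i = 1 then n else 0)"
| "rank n zz (Suc t) i =
     (if i = 1 then n
      else if i \<ge> 2 then
        rank n zz t i +
        (if zz (Suc t) (i - 1) \<and> rank n zz t (i - 1) > rank n zz t i then 1 else 0)
      else 0)"

definition sigma :: "nat \<Rightarrow> (nat \<Rightarrow> nat \<Rightarrow> bool) \<Rightarrow> nat \<Rightarrow> nat" where
  "sigma n zz k = (LEAST t. rank n zz t 2 = k)"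

text \<open>R^{(i)}_k = rho_i(sigma_k) - rho_{i+1}(sigma_k); Y_k is the vector (R^{(i)}_k) for i = 2..l.\<close>
definition Rk :: "nat \<Rightarrow> (nat \<Rightarrow> nat \<Rightarrow> bool) \<Rightarrow> nat \<Rightarrow> nat \<Rightarrow> nat" where
  "Rk n zz k i = rank n zz (sigma n zz k) i - rank n zz (sigma n zz k) (Suc i)"

definition vec_ge :: "nat \<Rightarrow> (nat \<Rightarrow> nat) \<Rightarrow> (nat \<Rightarrow> nat) \<Rightarrow> bool" where
  "vec_ge l a b \<longleftrightarrow> (\<forall>j\<in>{2..l}. a j \<ge> b j)"

end

theory Submission
  imports Defs
begin

text \<open>
  The proof is a coupling.  Condition on the time s+1 of the first successful
  transmission over link 1.  The process restarted at that moment (erasure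
  pattern shifted by s+1) has the same law as the original one and is
  independent of the event "first success at s+1".  Deterministically, from
  then on the original network stays exactly one packet ahead at node 2 and has
  at least as many innovative packets at every node (lemma one_ahead_step), so
  Y_{k+1} of the original dominates Y_k of the restarted process
  (Rk_after_first_success).  Summing over s gives P(Y_k >= w) <= P(Y_{k+1} >= w).

  Since "k packets have arrived by time T" is window-determined only for fixed
  T, the step inequality is first shown for these events and then passed to the
  limit T -> infinity.
\<close>

subsection \<open>Deterministic rank dynamics\<close>

declare rank.simps(2) [simp del]

lemma rank_source [simp]: "rank n c t (Suc 0) = n"
  by (cases t) (simp_all add: rank.simps)

lemma rank_node0 [simp]: "rank n c t 0 = 0"
  by (cases t) (simp_all add: rank.simps)

lemma rank_Suc_node:
  "1 \<le> i \<Longrightarrow> rank n c (Suc t) (Suc i) =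
     rank n c t (Suc i) + (if c (Suc t) i \<and> rank n c t (Suc i) < rank n c t i then 1 else 0)"
  by (simp add: rank.simps)

lemma rank2_Suc:
  "rank n c (Suc t) 2 = rank n c t 2 + (if c (Suc t) 1 \<and> rank n c t 2 < n then 1 else 0)"
  using rank_Suc_node[of 1 n c t] by (simp add: numeral_2_eq_2)

lemma rank_mono_time: "t \<le> t' \<Longrightarrow> rank n c t i \<le> rank n c t' i"
proof (induction t' rule: dec_induct)
  case (step t')
  have "rank n c t' i \<le> rank n c (Suc t') i"
    by (cases i; cases "i = 1") (auto simp: rank_Suc_node)
  with step.IH show ?case by linarith
qed simp

lemma rank_le_upstream: "1 \<le> i \<Longrightarrow> rank n c t (Suc i) \<le> rank n c t i"
proof (induction t arbitrary: i)
  case (Suc t)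
  have "rank n c t i \<le> rank n c (Suc t) i" by (rule rank_mono_time) simp
  with Suc.IH[OF Suc.prems] Suc.prems show ?case by (auto simp: rank_Suc_node)
qed simp

definition window_determined :: "nat \<Rightarrow> nat \<Rightarrow> ((nat \<Rightarrow> nat \<Rightarrow> bool) \<Rightarrow> 'b) \<Rightarrow> bool" where
  "window_determined l T F \<longleftrightarrow>
     (\<forall>c c'. (\<forall>u\<in>{1..T}. \<forall>j\<in>{1..l}. c u j = c' u j) \<longrightarrow> F c = F c')"

lemma window_determinedD:
  "window_determined l T F \<Longrightarrow> (\<And>u j. u \<in> {1..T} \<Longrightarrow> j \<in> {1..l} \<Longrightarrow> c u j = c' u j) \<Longrightarrow> F c = F c'"
  unfolding window_determined_def by blast

lemma rank_window:
  assumes agree: "\<forall>u\<in>{1..T}. \<forall>j\<in>{1..l}. c u j = c' u j"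
  shows "t \<le> T \<Longrightarrow> i \<le> Suc l \<Longrightarrow> rank n c t i = rank n c' t i"
proof (induction t arbitrary: i)
  case (Suc t)
  show ?case
  proof (cases "i \<ge> 2")
    case True
    then obtain j where j: "i = Suc j" "1 \<le> j" by (cases i) auto
    with Suc agree show ?thesis by (simp add: rank_Suc_node)
  next
    case False
    then have "i = 0 \<or> i = 1" by auto
    then show ?thesis by auto
  qed
qed simp

text \<open>The two window-determined functionals needed for measurability of the events Y_k >= w.\<close>
lemma window_determined_rank_eq:
  "i \<le> Suc l \<Longrightarrow> window_determined l t (\<lambda>c. rank n c t i = v)"
  unfolding window_determined_def using rank_window by blast

lemma window_determined_innovative_ge:
  "window_determined l t (\<lambda>c. vec_ge l (\<lambda>i. rank n c t i - rank n c t (Suc i)) w)"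
  unfolding window_determined_def vec_ge_def
proof (intro allI impI ball_cong refl)
  fix c c' :: "nat \<Rightarrow> nat \<Rightarrow> bool" and i
  assume "\<forall>u\<in>{1..t}. \<forall>j\<in>{1..l}. c u j = c' u j" "i \<in> {2..l}"
  then show "(w i \<le> rank n c t i - rank n c t (Suc i)) = (w i \<le> rank n c' t i - rank n c' t (Suc i))"
    using rank_window[of t l c c' t] by simp
qed

lemma sigma_reached: "rank n c t 2 = k \<Longrightarrow> rank n c (sigma n c k) 2 = k"
  unfolding sigma_def by (rule LeastI)

lemma sigma_le: "rank n c t 2 = k \<Longrightarrow> sigma n c k \<le> t"
  unfolding sigma_def by (rule Least_le)

lemma before_sigma: "u < sigma n c k \<Longrightarrow> rank n c u 2 \<noteq> k"
  unfolding sigma_def by (rule not_less_Least)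

lemma sigma_eqI: "rank n c t 2 = k \<Longrightarrow> (\<And>u. u < t \<Longrightarrow> rank n c u 2 \<noteq> k) \<Longrightarrow> sigma n c k = t"
  unfolding sigma_def by (rule Least_equality) (auto simp flip: not_less)

lemma sigma_window:
  assumes agree: "\<forall>u\<in>{1..T}. \<forall>j\<in>{1..l}. c u j = c' u j" and "1 \<le> l"
    and reached: "t \<le> T" "rank n c t 2 = k"
  shows "sigma n c' k = sigma n c k" and "i \<le> l \<Longrightarrow> Rk n c' k i = Rk n c k i"
proof -
  have same2: "rank n c' u 2 = rank n c u 2" if "u \<le> T" for u
    using rank_window[OF agree that, of 2] \<open>1 \<le> l\<close> by simp
  have le: "sigma n c k \<le> T" using sigma_le[OF reached(2)] reached(1) by simp
  show sg: "sigma n c' k = sigma n c k"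
  proof (rule sigma_eqI)
    show "rank n c' (sigma n c k) 2 = k" using same2[OF le] sigma_reached[OF reached(2)] by simp
    show "rank n c' u 2 \<noteq> k" if "u < sigma n c k" for u
      using same2[of u] before_sigma[OF that] that le by simp
  qed
  show "i \<le> l \<Longrightarrow> Rk n c' k i = Rk n c k i"
    unfolding Rk_def sg using rank_window[OF agree le] by simp
qed

subsection \<open>The coupling\<close>

definition one_ahead :: "(nat \<Rightarrow> nat) \<Rightarrow> (nat \<Rightarrow> nat) \<Rightarrow> bool" where
  "one_ahead A B \<longleftrightarrow> A 2 = Suc (B 2) \<and> (\<forall>i\<ge>2. B i - B (Suc i) \<le> A i - A (Suc i))"

lemma one_ahead_step:
  assumes ahead: "one_ahead (rank n c t) (rank n c' t')"
    and behind: "rank n c' (Suc t') 2 < n"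
    and same: "\<And>j. c (Suc t) j = c' (Suc t') j"
  shows "one_ahead (rank n c (Suc t)) (rank n c' (Suc t'))"
proof -
  define A B e where "A = rank n c t" and "B = rank n c' t'" and "e = c' (Suc t')"
  have A2: "A 2 = Suc (B 2)" and gap: "\<And>i. 2 \<le> i \<Longrightarrow> B i - B (Suc i) \<le> A i - A (Suc i)"
    using ahead by (auto simp: one_ahead_def A_def B_def)
  have monoA: "A (Suc i) \<le> A i" and monoB: "B (Suc i) \<le> B i" if "1 \<le> i" for i
    using rank_le_upstream[OF that] by (simp_all add: A_def B_def)
  have A': "rank n c (Suc t) (Suc i) = A (Suc i) + (if e i \<and> A (Suc i) < A i then 1 else 0)"
    and B': "rank n c' (Suc t') (Suc i) = B (Suc i) + (if e i \<and> B (Suc i) < B i then 1 else 0)"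
    if "1 \<le> i" for i
    using rank_Suc_node[OF that] same by (simp_all add: A_def B_def e_def)
  have B2: "B 2 < n" and B2': "e 1 \<and> B 2 < n \<Longrightarrow> Suc (B 2) < n"
    using behind B'[of 1] by (auto simp: numeral_2_eq_2 B_def split: if_splits)
  have cross: "e j \<and> B (Suc j) < B j \<Longrightarrow> e j \<and> A (Suc j) < A j" if "1 \<le> j" for j
  proof (cases "j = 1")
    case True
    then show "e j \<and> B (Suc j) < B j \<Longrightarrow> e j \<and> A (Suc j) < A j"
      using A2 B2' by (simp add: A_def B_def numeral_2_eq_2)
  next
    case False
    with that gap[of j] show "e j \<and> B (Suc j) < B j \<Longrightarrow> e j \<and> A (Suc j) < A j" by auto
  qed
  have "rank n c (Suc t) 2 = Suc (rank n c' (Suc t') 2)"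
    using A'[of 1] B'[of 1] A2 B2 cross[of 1] by (auto simp: numeral_2_eq_2 A_def B_def)
  moreover have "rank n c' (Suc t') i - rank n c' (Suc t') (Suc i)
      \<le> rank n c (Suc t) i - rank n c (Suc t) (Suc i)" if i: "2 \<le> i" for i
  proof -
    obtain j where j: "i = Suc j" "1 \<le> j" using i by (cases i) auto
    show ?thesis
      using A'[of i] B'[of i] A'[of j] B'[of j] cross[OF j(2)] gap[OF i] monoA[of i] monoB[of i] i j
      by (auto split: if_splits)
  qed
  ultimately show ?thesis by (simp add: one_ahead_def)
qed

lemma rank2_quiet: "(\<And>u. 1 \<le> u \<Longrightarrow> u \<le> s \<Longrightarrow> \<not> c u 1) \<Longrightarrow> rank n c s 2 = 0"
  by (induction s) (simp_all add: rank2_Suc)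

lemma one_ahead_after_first_success:
  assumes quiet: "\<And>u. 1 \<le> u \<Longrightarrow> u \<le> s \<Longrightarrow> \<not> c u 1" and success: "c (Suc s) 1" and "1 \<le> n"
    and behind: "rank n (\<lambda>t i. c (t + Suc s) i) t 2 < n"
  shows "one_ahead (rank n c (Suc s + t)) (rank n (\<lambda>t i. c (t + Suc s) i) t)"
  using behind
proof (induction t)
  case 0
  have "rank n c (Suc s) 2 = 1" using rank2_quiet[of s c n] quiet success \<open>1 \<le> n\<close> by (simp add: rank2_Suc)
  then show ?case by (simp add: one_ahead_def)
next
  case (Suc t)
  have "rank n (\<lambda>t i. c (t + Suc s) i) t 2 < n"
    using rank_mono_time[of t "Suc t" n "\<lambda>t i. c (t + Suc s) i" 2] Suc.prems by simp
  then have "one_ahead (rank n c (Suc s + t)) (rank n (\<lambda>t i. c (t + Suc s) i) t)"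
    by (rule Suc.IH)
  from one_ahead_step[OF this Suc.prems] show ?case by (simp add: add.commute)
qed

lemma Rk_after_first_success:
  assumes quiet: "\<And>u. 1 \<le> u \<Longrightarrow> u \<le> s \<Longrightarrow> \<not> c u 1" and success: "c (Suc s) 1"
    and "Suc k \<le> n" and reached: "rank n (\<lambda>t i. c (t + Suc s) i) t 2 = k" and "2 \<le> j"
  shows "Rk n (\<lambda>t i. c (t + Suc s) i) k j \<le> Rk n c (Suc k) j"
proof -
  define c' where "c' = (\<lambda>t i. c (t + Suc s) i)"
  define sg where "sg = sigma n c' k"
  have sg_reached: "rank n c' sg 2 = k" using sigma_reached[OF reached] by (simp add: sg_def c'_def)
  have ahead: "one_ahead (rank n c (Suc s + u)) (rank n c' u)" if "u \<le> sg" for u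
  proof -
    have "rank n c' u 2 < n" using rank_mono_time[OF that, of n c' 2] sg_reached \<open>Suc k \<le> n\<close> by simp
    then show ?thesis
      unfolding c'_def using one_ahead_after_first_success[of s c] quiet success \<open>Suc k \<le> n\<close> by simp
  qed
  have sigma_Suc: "sigma n c (Suc k) = Suc s + sg"
  proof (rule sigma_eqI)
    show "rank n c (Suc s + sg) 2 = Suc k" using ahead[of sg] sg_reached by (simp add: one_ahead_def)
    show "rank n c u 2 \<noteq> Suc k" if "u < Suc s + sg" for u
    proof (cases "u \<le> s")
      case True
      then show ?thesis using rank2_quiet[of u c n] quiet by simp
    next
      case False
      then obtain v where "u = Suc s + v" using le_Suc_ex[of "Suc s" u] by auto
      with that have v: "u = Suc s + v" "v < sg" by simp_all
      have "rank n c' v 2 \<noteq> k" using before_sigma[of v n c' k] v(2) by (simp add: sg_def)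
      then show ?thesis using ahead[of v] v by (simp add: one_ahead_def)
    qed
  qed
  have "Rk n c' k j \<le> Rk n c (Suc k) j"
    using ahead[of sg] \<open>2 \<le> j\<close> unfolding Rk_def sigma_Suc sg_def [symmetric] one_ahead_def
    by blast
  then show ?thesis by (simp only: c'_def)
qed

definition Y_ge_by :: "nat \<Rightarrow> nat \<Rightarrow> nat \<Rightarrow> nat \<Rightarrow> (nat \<Rightarrow> nat) \<Rightarrow> (nat \<Rightarrow> nat \<Rightarrow> bool) \<Rightarrow> bool" where
  "Y_ge_by l n k T w c \<longleftrightarrow> (\<exists>t\<le>T. rank n c t 2 = k) \<and> vec_ge l (Rk n c k) w"

lemma window_determined_Y_ge_by:
  assumes "1 \<le> l" shows "window_determined l T (Y_ge_by l n k T w)"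
  unfolding window_determined_def
proof (intro allI impI)
  fix c c' :: "nat \<Rightarrow> nat \<Rightarrow> bool"
  assume agree: "\<forall>u\<in>{1..T}. \<forall>j\<in>{1..l}. c u j = c' u j"
  have same2: "rank n c' t 2 = rank n c t 2" if "t \<le> T" for t
    using rank_window[OF agree that, of 2] \<open>1 \<le> l\<close> by simp
  show "Y_ge_by l n k T w c = Y_ge_by l n k T w c'"
  proof (cases "\<exists>t\<le>T. rank n c t 2 = k")
    case True
    then obtain t where "t \<le> T" "rank n c t 2 = k" by blast
    from sigma_window(2)[OF agree assms this] True same2 show ?thesis
      unfolding Y_ge_by_def vec_ge_def by auto
  next
    case False
    then show ?thesis using same2 unfolding Y_ge_by_def by auto
  qed
qed

lemma rank2_reaches:
  assumes often: "\<forall>m. \<exists>t>m. c t 1" and "k \<le> n"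
  shows "\<exists>t. rank n c t 2 = k"
proof -
  have "\<exists>t. k \<le> rank n c t 2" using \<open>k \<le> n\<close>
  proof (induction k)
    case (Suc k)
    then obtain t where t: "k \<le> rank n c t 2" by auto
    obtain u where u: "t < u" "c u 1" using often by blast
    then obtain v where v: "u = Suc v" "t \<le> v" by (cases u) auto
    have "k \<le> rank n c v 2" using t rank_mono_time[OF v(2), of n c 2] by linarith
    then have "Suc k \<le> rank n c u 2" using Suc.prems u(2) v(1) rank2_Suc[of n c v] by auto
    then show ?case by blast
  qed simp
  then obtain t where t: "k \<le> rank n c t 2" by blast
  have "\<exists>i\<le>t. int (rank n c i 2) = int k"
  proof (rule nat0_intermed_int_val)
    show "\<forall>i<t. \<bar>int (rank n c (i + 1) 2) - int (rank n c i 2)\<bar> \<le> 1"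
      by (simp add: rank2_Suc)
  qed (use t in simp_all)
  then show ?thesis by auto
qed

subsection \<open>The probabilistic model\<close>

text \<open>Independent erasures with P(z t i) = 1 - p i; only p 1 < 1 is needed.\<close>
locale line_network = prob_space M for M :: "'a measure" +
  fixes l n :: nat and p :: "nat \<Rightarrow> real" and z :: "nat \<Rightarrow> nat \<Rightarrow> 'a \<Rightarrow> bool"
  assumes links: "1 \<le> l"
    and indep: "indep_vars (\<lambda>_. count_space UNIV) (\<lambda>(t, i). z t i) {(t, i). t \<ge> 1 \<and> i \<in> {1..l}}"
    and marginal: "\<And>t i. t \<ge> 1 \<Longrightarrow> i \<in> {1..l} \<Longrightarrow> prob {x \<in> space M. z t i x} = 1 - p i"
    and first_link_lossy: "p 1 < 1"
begin

definition coords :: "(nat \<times> nat) set" where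
  "coords = {(t, i). t \<ge> 1 \<and> i \<in> {1..l}}"

definition outcome_prob :: "nat \<Rightarrow> bool \<Rightarrow> real" where
  "outcome_prob i b = (if b then 1 - p i else p i)"

lemma z_event_sets:
  assumes "(t, i) \<in> coords" shows "{x \<in> space M. z t i x = b} \<in> events"
proof -
  have "z t i \<in> measurable M (count_space UNIV)"
    using indep assms unfolding indep_vars_def coords_def by auto
  from measurable_sets[OF this, of "{b}"] show ?thesis by (simp add: vimage_def Int_def conj_commute)
qed

lemma prob_z_eq: "(t, i) \<in> coords \<Longrightarrow> prob {x \<in> space M. z t i x = b} = outcome_prob i b"
proof (cases b)
  case False
  assume ti: "(t, i) \<in> coords"
  have "{x \<in> space M. z t i x = b} = space M - {x \<in> space M. z t i x = True}" using False by auto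
  then show ?thesis
    using prob_compl[OF z_event_sets[OF ti, of True]] marginal ti False by (simp add: coords_def outcome_prob_def)
qed (simp add: marginal coords_def outcome_prob_def)

definition cyl :: "(nat \<times> nat) set \<Rightarrow> (nat \<times> nat \<Rightarrow> bool) \<Rightarrow> 'a set" where
  "cyl J f = {x \<in> space M. \<forall>j\<in>J. z (fst j) (snd j) x = f j}"

lemma cyl_sets: "finite J \<Longrightarrow> J \<subseteq> coords \<Longrightarrow> cyl J f \<in> events"
  unfolding cyl_def by (intro sets.sets_Collect_finite_All z_event_sets) auto

lemma prob_cyl:
  assumes "finite J" "J \<subseteq> coords"
  shows "prob (cyl J f) = (\<Prod>j\<in>J. outcome_prob (snd j) (f j))"
proof (cases "J = {}")
  case True
  then show ?thesis by (simp add: cyl_def prob_space)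
next
  case False
  have "cyl J f = (\<Inter>j\<in>J. (\<lambda>(t, i). z t i) j -` {f j} \<inter> space M)"
    using False by (auto simp: cyl_def case_prod_beta)
  also have "prob \<dots> = (\<Prod>j\<in>J. prob ((\<lambda>(t, i). z t i) j -` {f j} \<inter> space M))"
    using indep False assms by (intro indep_varsD) (auto simp: coords_def)
  also have "\<dots> = (\<Prod>j\<in>J. outcome_prob (snd j) (f j))"
  proof (rule prod.cong)
    fix j assume "j \<in> J"
    then have "(fst j, snd j) \<in> coords" using assms by auto
    from prob_z_eq[OF this] show "prob ((\<lambda>(t, i). z t i) j -` {f j} \<inter> space M) = outcome_prob (snd j) (f j)"
      by (simp add: vimage_def Int_def case_prod_beta conj_commute)
  qed simp
  finally show ?thesis .
qed

lemma prob_cyl_Int: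
  assumes "finite J" "finite J'" "J \<subseteq> coords" "J' \<subseteq> coords" "J \<inter> J' = {}"
  shows "prob (cyl J f \<inter> cyl J' g) = prob (cyl J f) * prob (cyl J' g)"
proof -
  define h where "h j = (if j \<in> J then f j else g j)" for j
  have "cyl J f \<inter> cyl J' g = cyl (J \<union> J') h"
    using assms(5) by (auto simp: cyl_def h_def)
  also have "prob \<dots> = (\<Prod>j\<in>J. outcome_prob (snd j) (h j)) * (\<Prod>j\<in>J'. outcome_prob (snd j) (h j))"
    using assms by (simp add: prob_cyl prod.union_disjoint)
  also have "\<dots> = (\<Prod>j\<in>J. outcome_prob (snd j) (f j)) * (\<Prod>j\<in>J'. outcome_prob (snd j) (g j))"
    using assms(5) by (auto simp: h_def intro!: arg_cong2[where f="(*)"] prod.cong)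
  also have "\<dots> = prob (cyl J f) * prob (cyl J' g)"
    using assms by (simp add: prob_cyl)
  finally show ?thesis .
qed

definition window :: "nat \<Rightarrow> nat \<Rightarrow> (nat \<times> nat) set" where
  "window s T = {Suc s..s + T} \<times> {1..l}"

lemma window_finite: "finite (window s T)" and window_coords: "window s T \<subseteq> coords"
  by (auto simp: window_def coords_def)

definition shifted_cyl :: "nat \<Rightarrow> nat \<Rightarrow> (nat \<times> nat \<Rightarrow> bool) \<Rightarrow> 'a set" where
  "shifted_cyl s T f = cyl (window s T) (\<lambda>j. f (fst j - s, snd j))"

lemma shifted_cyl_sets: "shifted_cyl s T f \<in> events"
  unfolding shifted_cyl_def by (rule cyl_sets[OF window_finite window_coords])

lemma prob_shifted_cyl: "prob (shifted_cyl s T f) = prob (cyl (window 0 T) f)"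
proof -
  have "(\<Prod>j\<in>window s T. outcome_prob (snd j) (f (fst j - s, snd j)))
      = (\<Prod>j\<in>window 0 T. outcome_prob (snd j) (f j))"
    by (rule prod.reindex_bij_witness[of _ "\<lambda>j. (fst j + s, snd j)" "\<lambda>j. (fst j - s, snd j)"])
       (auto simp: window_def)
  then show ?thesis
    unfolding shifted_cyl_def by (simp add: prob_cyl window_finite window_coords)
qed

lemma shifted_cyl_disjoint: "disjoint_family_on (shifted_cyl s T) (window 0 T \<rightarrow>\<^sub>E UNIV)"
  unfolding disjoint_family_on_def
proof (intro ballI impI)
  fix f g :: "nat \<times> nat \<Rightarrow> bool" assume f: "f \<in> window 0 T \<rightarrow>\<^sub>E UNIV" and g: "g \<in> window 0 T \<rightarrow>\<^sub>E UNIV" and "f \<noteq> g"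
  then obtain j where differ: "f j \<noteq> g j" by blast
  then have j: "j \<in> window 0 T" using PiE_arb[OF f] PiE_arb[OF g] by metis
  then have "(fst j + s, snd j) \<in> window s T" by (auto simp: window_def)
  with differ show "shifted_cyl s T f \<inter> shifted_cyl s T g = {}"
    unfolding shifted_cyl_def cyl_def by fastforce
qed

lemma prob_shifted_cyl_Union:
  assumes "B \<in> events" "P \<subseteq> window 0 T \<rightarrow>\<^sub>E UNIV"
  shows "prob (B \<inter> (\<Union>f\<in>P. shifted_cyl s T f)) = (\<Sum>f\<in>P. prob (B \<inter> shifted_cyl s T f))"
proof -
  have "finite P"
    using assms(2) by (rule finite_subset) (simp add: finite_PiE window_finite)
  moreover have "disjoint_family_on (\<lambda>f. B \<inter> shifted_cyl s T f) P"
    using shifted_cyl_disjoint assms(2) unfolding disjoint_family_on_def by blast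
  moreover have "B \<inter> (\<Union>f\<in>P. shifted_cyl s T f) = (\<Union>f\<in>P. B \<inter> shifted_cyl s T f)"
    by blast
  ultimately show ?thesis
    using assms(1) shifted_cyl_sets by (simp only:) (rule finite_measure_finite_Union; blast)
qed

definition patterns :: "nat \<Rightarrow> ((nat \<Rightarrow> nat \<Rightarrow> bool) \<Rightarrow> bool) \<Rightarrow> (nat \<times> nat \<Rightarrow> bool) set" where
  "patterns T F = {f \<in> window 0 T \<rightarrow>\<^sub>E UNIV. F (\<lambda>t i. f (t, i))}"

lemma patterns_PiE: "patterns T F \<subseteq> window 0 T \<rightarrow>\<^sub>E UNIV"
  by (simp add: patterns_def)

lemma shifted_event_eq:
  assumes F: "window_determined l T F"
  shows "{x \<in> space M. F (\<lambda>t i. z (t + s) i x)} = (\<Union>f\<in>patterns T F. shifted_cyl s T f)"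
proof safe
  fix x assume x: "x \<in> space M" "F (\<lambda>t i. z (t + s) i x)"
  define f where "f = restrict (\<lambda>j. z (fst j + s) (snd j) x) (window 0 T)"
  have "F (\<lambda>t i. f (t, i)) = F (\<lambda>t i. z (t + s) i x)"
    by (rule window_determinedD[OF F]) (simp add: f_def window_def)
  with x have "f \<in> patterns T F" by (simp add: patterns_def f_def)
  moreover have "x \<in> shifted_cyl s T f"
    using x by (auto simp: shifted_cyl_def cyl_def f_def window_def)
  ultimately show "x \<in> (\<Union>f\<in>patterns T F. shifted_cyl s T f)" by blast
next
  fix x f assume f: "f \<in> patterns T F" and x: "x \<in> shifted_cyl s T f"
  then show "x \<in> space M" by (simp add: shifted_cyl_def cyl_def)
  have "F (\<lambda>t i. f (t, i)) = F (\<lambda>t i. z (t + s) i x)"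
    by (rule window_determinedD[OF F]) (use x in \<open>auto simp: shifted_cyl_def cyl_def window_def\<close>)
  then show "F (\<lambda>t i. z (t + s) i x)" using f by (simp add: patterns_def)
qed

lemma shifted_event_sets:
  assumes "window_determined l T F" shows "{x \<in> space M. F (\<lambda>t i. z (t + s) i x)} \<in> events"
  unfolding shifted_event_eq[OF assms]
  by (intro sets.finite_UN shifted_cyl_sets finite_subset[OF patterns_PiE finite_PiE] window_finite) simp

lemma prob_shifted_event:
  assumes "window_determined l T F"
  shows "prob {x \<in> space M. F (\<lambda>t i. z (t + s) i x)} = (\<Sum>f\<in>patterns T F. prob (cyl (window 0 T) f))"
proof -
  have "prob {x \<in> space M. F (\<lambda>t i. z (t + s) i x)} = prob (space M \<inter> (\<Union>f\<in>patterns T F. shifted_cyl s T f))"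
    by (simp add: shifted_event_eq[OF assms, symmetric] Int_absorb1)
  also have "\<dots> = (\<Sum>f\<in>patterns T F. prob (space M \<inter> shifted_cyl s T f))"
    by (rule prob_shifted_cyl_Union[OF sets.top patterns_PiE])
  also have "\<dots> = (\<Sum>f\<in>patterns T F. prob (cyl (window 0 T) f))"
    using sets.sets_into_space[OF shifted_cyl_sets] by (simp add: Int_absorb1 prob_shifted_cyl)
  finally show ?thesis .
qed

definition first_success :: "nat \<Rightarrow> 'a set" where
  "first_success s = cyl ({1..Suc s} \<times> {1}) (\<lambda>j. fst j = Suc s)"

lemma first_success_iff:
  "x \<in> first_success s \<longleftrightarrow> x \<in> space M \<and> (\<forall>u. 1 \<le> u \<longrightarrow> u \<le> s \<longrightarrow> \<not> z u 1 x) \<and> z (Suc s) 1 x"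
proof -
  have "(\<forall>j\<in>{1..Suc s} \<times> {1}. z (fst j) (snd j) x = (fst j = Suc s)) \<longleftrightarrow>
        (\<forall>u. 1 \<le> u \<longrightarrow> u \<le> s \<longrightarrow> \<not> z u 1 x) \<and> z (Suc s) 1 x"
    by (auto simp: atLeastAtMostSuc_conv)
  then show ?thesis by (simp add: first_success_def cyl_def)
qed

lemma first_success_block: "finite ({1..Suc s} \<times> {1})" "{1..Suc s} \<times> {1} \<subseteq> coords"
  using links by (auto simp: coords_def)

lemma first_success_sets: "first_success s \<in> events"
  unfolding first_success_def using first_success_block by (rule cyl_sets)

lemma first_success_indep:
  assumes F: "window_determined l T F"
  shows "prob (first_success s \<inter> {x \<in> space M. F (\<lambda>t i. z (t + Suc s) i x)})
       = prob (first_success s) * prob {x \<in> space M. F (\<lambda>t i. z t i x)}"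
proof -
  have disj: "({1..Suc s} \<times> {1}) \<inter> window (Suc s) T = {}" by (auto simp: window_def)
  have "prob (first_success s \<inter> {x \<in> space M. F (\<lambda>t i. z (t + Suc s) i x)})
      = (\<Sum>f\<in>patterns T F. prob (first_success s \<inter> shifted_cyl (Suc s) T f))"
    unfolding shifted_event_eq[OF F] by (rule prob_shifted_cyl_Union[OF first_success_sets patterns_PiE])
  also have "\<dots> = (\<Sum>f\<in>patterns T F. prob (first_success s) * prob (cyl (window 0 T) f))"
  proof (rule sum.cong)
    fix f
    have "prob (first_success s \<inter> shifted_cyl (Suc s) T f) = prob (first_success s) * prob (shifted_cyl (Suc s) T f)"
      unfolding first_success_def shifted_cyl_def
      by (rule prob_cyl_Int[OF first_success_block(1) window_finite first_success_block(2) window_coords disj])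
    then show "prob (first_success s \<inter> shifted_cyl (Suc s) T f) = prob (first_success s) * prob (cyl (window 0 T) f)"
      by (simp add: prob_shifted_cyl)
  qed simp
  also have "\<dots> = prob (first_success s) * prob {x \<in> space M. F (\<lambda>t i. z t i x)}"
    using prob_shifted_event[OF F, of 0] by (simp add: sum_distrib_left)
  finally show ?thesis .
qed

lemma link1_lossy_nonneg: "0 \<le> p 1"
  using prob_z_eq[of 1 1 False] links measure_nonneg[of M "{x \<in> space M. z 1 1 x = False}"]
  by (simp add: coords_def outcome_prob_def)

text \<open>Link 1 succeeds infinitely often almost surely, since s consecutive failures have
  probability (p 1)^s.\<close>
lemma AE_link1_often: "AE x in M. \<forall>m. \<exists>t>m. z t 1 x"
  unfolding AE_all_countable
proof
  fix m
  define quiet where "quiet N = cyl ({Suc m..m + N} \<times> {1}) (\<lambda>_. False)" for N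
  have block: "finite ({Suc m..m + N} \<times> {1})" "{Suc m..m + N} \<times> {1} \<subseteq> coords" for N
    using links by (auto simp: coords_def)
  have quiet_sets: "quiet N \<in> events" for N
    unfolding quiet_def using block by (rule cyl_sets)
  have prob_quiet: "prob (quiet N) = p 1 ^ N" for N
  proof -
    have "prob (quiet N) = (\<Prod>j\<in>{Suc m..m + N} \<times> {1::nat}. p 1)"
      unfolding quiet_def prob_cyl[OF block] by (intro prod.cong) (auto simp: outcome_prob_def)
    then show ?thesis by (simp add: card_cartesian_product)
  qed
  have "prob (\<Inter>N. quiet N) \<le> p 1 ^ N" for N
    using finite_measure_mono[of "\<Inter>N. quiet N" "quiet N"] quiet_sets prob_quiet by auto
  moreover have "(\<lambda>N. p 1 ^ N) \<longlonglongrightarrow> 0"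
    using link1_lossy_nonneg first_link_lossy by (intro LIMSEQ_power_zero) simp
  ultimately have "prob (\<Inter>N. quiet N) \<le> 0" by (intro LIMSEQ_le_const) auto
  then have "(\<Inter>N. quiet N) \<in> null_sets M"
    using quiet_sets by (auto intro!: null_setsI simp: emeasure_eq_measure measure_le_0_iff)
  moreover have "{x \<in> space M. \<not> (\<exists>t>m. z t 1 x)} \<subseteq> (\<Inter>N. quiet N)"
    by (auto simp: quiet_def cyl_def)
  ultimately show "AE x in M. \<exists>t>m. z t 1 x" by (rule AE_I')
qed

lemma first_success_disjoint: "disjoint_family first_success"
proof -
  have "first_success s \<inter> first_success s' = {}" if "s < s'" for s s'
  proof -
    have "\<not> z (Suc s) 1 x" if "x \<in> first_success s'" for x
      using that \<open>s < s'\<close> by (simp add: first_success_iff)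
    then show ?thesis by (auto simp: first_success_iff)
  qed
  then show ?thesis
    unfolding disjoint_family_on_def by (metis Int_commute linorder_neqE_nat)
qed

lemma first_success_sums: "(\<lambda>s. prob (first_success s)) sums 1"
proof -
  have "(\<lambda>s. prob (first_success s)) sums prob (\<Union>s. first_success s)"
    using first_success_sets first_success_disjoint by (intro finite_measure_UNION) auto
  moreover have "prob (\<Union>s. first_success s) = 1"
  proof (rule antisym)
    have "x \<in> (\<Union>s. first_success s)" if x: "x \<in> space M" "\<exists>t>0. z t 1 x" for x
    proof -
      obtain s where "\<forall>u\<le>s. \<not> (0 < u \<and> z u 1 x)" "z (Suc s) 1 x"
        using ex_least_nat_less[of "\<lambda>t. 0 < t \<and> z t 1 x"] x(2) by blast
      then show ?thesis using x(1) by (auto simp: first_success_iff)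
    qed
    then have "AE x in M. x \<in> space M \<longrightarrow> x \<in> (\<Union>s. first_success s)"
      using AE_link1_often by auto
    then show "1 \<le> prob (\<Union>s. first_success s)"
      using first_success_sets by (subst prob_space[symmetric]) (intro finite_measure_mono_AE; blast)
  qed simp
  ultimately show ?thesis by simp
qed

subsection \<open>Monotonicity of P(Y_k >= w)\<close>

definition Y_ge_event :: "nat \<Rightarrow> (nat \<Rightarrow> nat) \<Rightarrow> 'a set" where
  "Y_ge_event k w = {x \<in> space M. vec_ge l (Rk n (\<lambda>t i. z t i x) k) w}"

text \<open>Measurability: sigma_k is a measurable random time and, at each fixed time, the
  event concerns finitely many erasures.\<close>
lemma Y_ge_event_sets: "Y_ge_event k w \<in> events"
proof -
  have "Measurable.pred M (\<lambda>x. rank n (\<lambda>t i. z t i x) t 2 = k)" for t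
    using shifted_event_sets[OF window_determined_rank_eq[of 2 l t n k], of 0] links
    by (simp add: Measurable.pred_def)
  then have sigma_meas: "(\<lambda>x. sigma n (\<lambda>t i. z t i x) k) \<in> measurable M (count_space UNIV)"
    unfolding sigma_def by (rule measurable_Least)
  have "Measurable.pred M (\<lambda>x. vec_ge l (\<lambda>i. rank n (\<lambda>t i. z t i x) t i - rank n (\<lambda>t i. z t i x) t (Suc i)) w)"
    for t using shifted_event_sets[OF window_determined_innovative_ge[of l t n w], of 0]
    by (simp add: Measurable.pred_def)
  from measurable_compose_countable[where f="\<lambda>t x. vec_ge l (\<lambda>i. rank n (\<lambda>t i. z t i x) t i
      - rank n (\<lambda>t i. z t i x) t (Suc i)) w", OF this sigma_meas] show ?thesis
    by (simp add: Y_ge_event_def Rk_def [abs_def] Measurable.pred_def)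
qed

lemma first_success_Y_ge_by_subset:
  assumes "Suc k \<le> n"
  shows "first_success s \<inter> {x \<in> space M. Y_ge_by l n k T w (\<lambda>t i. z (t + Suc s) i x)}
       \<subseteq> Y_ge_event (Suc k) w"
proof
  fix x assume x: "x \<in> first_success s \<inter> {x \<in> space M. Y_ge_by l n k T w (\<lambda>t i. z (t + Suc s) i x)}"
  then have space: "x \<in> space M" and quiet: "\<And>u. 1 \<le> u \<Longrightarrow> u \<le> s \<Longrightarrow> \<not> z u 1 x"
    and success: "z (Suc s) 1 x" by (auto simp: first_success_iff)
  from x obtain t where reached: "rank n (\<lambda>t i. z (t + Suc s) i x) t 2 = k"
    and ge: "vec_ge l (Rk n (\<lambda>t i. z (t + Suc s) i x) k) w" by (auto simp: Y_ge_by_def)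
  have "w j \<le> Rk n (\<lambda>t i. z t i x) (Suc k) j" if j: "j \<in> {2..l}" for j
  proof -
    have "w j \<le> Rk n (\<lambda>t i. z (t + Suc s) i x) k j" using ge j by (simp add: vec_ge_def)
    also have "\<dots> \<le> Rk n (\<lambda>t i. z t i x) (Suc k) j"
      using Rk_after_first_success[of s "\<lambda>t i. z t i x" k n] quiet success assms reached j by simp
    finally show ?thesis .
  qed
  with space show "x \<in> Y_ge_event (Suc k) w" by (simp add: Y_ge_event_def vec_ge_def)
qed

text \<open>Summing over the time of the first success on link 1.\<close>
lemma prob_Y_ge_by_le:
  assumes "Suc k \<le> n"
  shows "prob {x \<in> space M. Y_ge_by l n k T w (\<lambda>t i. z t i x)} \<le> prob (Y_ge_event (Suc k) w)"
proof -
  define G E where "G = {x \<in> space M. Y_ge_by l n k T w (\<lambda>t i. z t i x)}" and "E = Y_ge_event (Suc k) w"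
  have F: "window_determined l T (Y_ge_by l n k T w)" using window_determined_Y_ge_by[OF links] .
  have disj: "disjoint_family (\<lambda>s. first_success s \<inter> E)"
    using first_success_disjoint unfolding disjoint_family_on_def by blast
  have "prob (first_success s) * prob G \<le> prob (first_success s \<inter> E)" for s
  proof -
    have "prob (first_success s) * prob G
        = prob (first_success s \<inter> {x \<in> space M. Y_ge_by l n k T w (\<lambda>t i. z (t + Suc s) i x)})"
      using first_success_indep[OF F] by (simp add: G_def)
    also have "\<dots> \<le> prob (first_success s \<inter> E)"
      using first_success_Y_ge_by_subset[OF assms] first_success_sets Y_ge_event_sets
      by (intro finite_measure_mono) (auto simp: E_def)
    finally show ?thesis .
  qed
  moreover have "(\<lambda>s. prob (first_success s) * prob G) sums prob G"
    using sums_mult2[OF first_success_sums] by simp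
  moreover have "(\<lambda>s. prob (first_success s \<inter> E)) sums prob (\<Union>s. first_success s \<inter> E)"
    using first_success_sets Y_ge_event_sets disj by (intro finite_measure_UNION) (auto simp: E_def)
  ultimately have "prob G \<le> prob (\<Union>s. first_success s \<inter> E)" by (rule sums_le)
  also have "\<dots> \<le> prob E" using Y_ge_event_sets by (intro finite_measure_mono) (auto simp: E_def)
  finally show ?thesis by (simp add: G_def E_def)
qed

text \<open>Letting T tend to infinity: packet k arrives almost surely.\<close>
lemma prob_Y_ge_event_step:
  assumes "Suc k \<le> n"
  shows "prob (Y_ge_event k w) \<le> prob (Y_ge_event (Suc k) w)"
proof -
  define G where "G T = {x \<in> space M. Y_ge_by l n k T w (\<lambda>t i. z t i x)}" for T
  have G_sets: "G T \<in> events" for T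
    using shifted_event_sets[OF window_determined_Y_ge_by[OF links, of T n k w], of 0] by (simp add: G_def)
  have "AE x in M. x \<in> Y_ge_event k w \<longrightarrow> x \<in> (\<Union>T. G T)"
    using AE_link1_often
  proof eventually_elim
    case (elim x)
    then obtain t where "rank n (\<lambda>t i. z t i x) t 2 = k"
      using rank2_reaches[of "\<lambda>t i. z t i x" k n] assms by auto
    then show ?case by (auto simp: G_def Y_ge_by_def Y_ge_event_def)
  qed
  then have "prob (Y_ge_event k w) \<le> prob (\<Union>T. G T)"
    using G_sets by (intro finite_measure_mono_AE) auto
  also have "\<dots> \<le> prob (Y_ge_event (Suc k) w)"
  proof (rule LIMSEQ_le_const2)
    have "incseq G" by (rule incseq_SucI) (auto simp: G_def Y_ge_by_def le_Suc_eq)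
    then show "(\<lambda>T. prob (G T)) \<longlonglongrightarrow> prob (\<Union>T. G T)"
      using G_sets by (intro finite_Lim_measure_incseq) auto
    show "\<exists>N. \<forall>T\<ge>N. prob (G T) \<le> prob (Y_ge_event (Suc k) w)"
      using prob_Y_ge_by_le[OF assms] by (auto simp: G_def)
  qed
  finally show ?thesis .
qed

lemma prob_Y_ge_event_mono:
  assumes "k \<le> k'" "k' \<le> n"
  shows "prob (Y_ge_event k w) \<le> prob (Y_ge_event k' w)"
  using assms(1)
proof (induction k' rule: dec_induct)
  case (step m)
  have "prob (Y_ge_event m w) \<le> prob (Y_ge_event (Suc m) w)"
    using step.hyps(2) assms(2) by (intro prob_Y_ge_event_step) simp
  with step.IH show ?case by linarith
qed simp

end

theorem proposition1:
  fixes M :: "'a measure" and l n :: nat and p :: "nat \<Rightarrow> real"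
    and z :: "nat \<Rightarrow> nat \<Rightarrow> 'a \<Rightarrow> bool"
    and k k' :: nat and w :: "nat \<Rightarrow> nat"
  assumes "prob_space M"
    and "l \<ge> 2" and "n \<ge> 1"
    and "\<And>i. i \<in> {1..l} \<Longrightarrow> 0 \<le> p i \<and> p i < 1"
    and "prob_space.indep_vars M (\<lambda>_. count_space UNIV) (\<lambda>(t, i). z t i)
           {(t, i). t \<ge> 1 \<and> i \<in> {1..l}}"
    and "\<And>t i. t \<ge> 1 \<Longrightarrow> i \<in> {1..l} \<Longrightarrow>
           measure M {x \<in> space M. z t i x} = 1 - p i"
    and "1 \<le> k" and "k \<le> k'" and "k' \<le> n"
  shows "measure M {x \<in> space M. vec_ge l (Rk n (\<lambda>t i. z t i x) k) w}
       \<le> measure M {x \<in> space M. vec_ge l (Rk n (\<lambda>t i. z t i x) k') w}"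
proof -
  have "line_network M l p z"
    using assms(1-6) by (auto simp: line_network_def line_network_axioms_def)
  then interpret line_network M l n p z .
  show ?thesis
    using prob_Y_ge_event_mono[OF assms(8,9)] by (simp add: Y_ge_event_def)
qed

end
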